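(* Let $A=\begin{pmatrix}\alpha&0\\\beta&0\end{pmatrix}$ and $B=\begin{pmatrix}0&\gamma\\0&\delta\end{pmatrix}$ be rank-one matrices in $M_2(\mathbb C)$. Then every matrix in $A^\perp\cap B^\perp$ has rank at most one if and only if $(\alpha,\beta)\in\mathbb C(\gamma,\delta)\setminus\{0\}$.
   Context: $M_2(\mathbb C)$ carries the operator (spectral) norm. $X\perp Y$ (Birkhoff–James orthogonality) means $\|X+\lambda Y\|\ge\|X\|$ for all $\lambda\in\mathbb C$, and $X^\perp:=\{Y: X\perp Y\}$. *)

theory Defs
  imports "HOL-Analysis.Analysis"
begin

type_synonym cmat2 = "complex^2^2"

definition mat2 :: "complex \<Rightarrow> complex \<Rightarrow> complex \<Rightarrow> complex \<Rightarrow> cmat2" where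
  "mat2 a b c d = (\<chi> i j. if i = 1 then (if j = 1 then a else b) else (if j = 1 then c else d))"

definition opnorm :: "cmat2 \<Rightarrow> real" where
  "opnorm M = onorm (\<lambda>x::complex^2. M *v x)"

definition cscale :: "complex \<Rightarrow> cmat2 \<Rightarrow> cmat2" where
  "cscale c M = (\<chi> i j. c * M $ i $ j)"

definition bj_orth :: "cmat2 \<Rightarrow> cmat2 \<Rightarrow> bool" where
  "bj_orth X Y \<longleftrightarrow> (\<forall>l::complex. opnorm (X + cscale l Y) \<ge> opnorm X)"

definition bj_perp :: "cmat2 \<Rightarrow> cmat2 set" where
  "bj_perp X = {Y. bj_orth X Y}"

end

theory Submission
  imports Defs
begin

text \<open>
  Write \<open>A = a e\<^sub>1\<^sup>*\<close> and \<open>B = b e\<^sub>2\<^sup>*\<close> with \<open>a = (\<alpha>, \<beta>)\<close>, \<open>b = (\<gamma>, \<delta>)\<close>. For a matrix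
  \<open>a e\<^sub>j\<^sup>*\<close> with a single nonzero column, Birkhoff--James orthogonality \<open>a e\<^sub>j\<^sup>* \<perp> Y\<close> holds
  iff \<open>\<langle>a, Y e\<^sub>j\<rangle> = 0\<close>. Sufficiency: \<open>\<parallel>a e\<^sub>j\<^sup>* + \<lambda>Y\<parallel> \<ge> \<parallel>a + \<lambda>Y e\<^sub>j\<parallel> \<ge> \<parallel>a\<parallel>\<close> by Pythagoras.
  Necessity: if \<open>c = \<langle>a, Y e\<^sub>j\<rangle> \<noteq> 0\<close>, then \<open>\<lambda> = -c\<^sup>*/(2\<parallel>Y\<parallel>\<^sup>2)\<close> gives
  \<open>\<parallel>a e\<^sub>j\<^sup>* + \<lambda>Y\<parallel>\<^sup>2 \<le> \<parallel>a\<parallel>\<^sup>2 - |c|\<^sup>2/(4\<parallel>Y\<parallel>\<^sup>2)\<close>, by expanding \<open>\<parallel>(a e\<^sub>j\<^sup>* + \<lambda>Y)x\<parallel>\<^sup>2\<close> and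
  splitting \<open>x\<close> into its \<open>e\<^sub>j\<close>-component and the rest.

  Hence \<open>X \<in> A\<^sup>\<perp> \<inter> B\<^sup>\<perp>\<close> means that the first column of \<open>X\<close> is orthogonal to \<open>a\<close> and
  the second to \<open>b\<close>. If \<open>a\<close> and \<open>b\<close> are parallel, both columns lie on the line \<open>b\<^sup>\<perp>\<close>, so
  \<open>det X = 0\<close>. Otherwise the matrix with columns \<open>(\<beta>\<^sup>*, -\<alpha>\<^sup>*)\<close> and \<open>(\<delta>\<^sup>*, -\<gamma>\<^sup>*)\<close> lies in
  \<open>A\<^sup>\<perp> \<inter> B\<^sup>\<perp>\<close> and has determinant \<open>(\<alpha>\<delta> - \<beta>\<gamma>)\<^sup>* \<noteq> 0\<close>.
\<close>

lemma det_eq_0_rank_gen: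
  fixes A :: "'a::field^'n^'n"
  shows "det A = 0 \<longleftrightarrow> rank A < CARD('n)"
proof -
  have "rank A = CARD('n) \<longleftrightarrow> vec.span (rows A) = UNIV"
    using vec.dim_eq_full[of "rows A"]
    by (simp add: row_rank_def_gen vec.dimension_def card_cart_basis)
  also have "\<dots> \<longleftrightarrow> det A \<noteq> 0"
    by (metis matrix_left_invertible_span_rows_gen invertible_left_inverse invertible_det_nz)
  finally show ?thesis
    using dim_subset_UNIV_cart_gen[of "rows A"] by (auto simp: row_rank_def_gen)
qed

lemma rank_0_gen [simp]: "rank (0::'a::field^'n^'m) = 0"
  by (auto simp: row_rank_def_gen rows_def row_def zero_vec_def)

lemma rank_le_1_iff_det_eq_0: "rank (A::'a::field^2^2) \<le> 1 \<longleftrightarrow> det A = 0"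
  by (simp add: det_eq_0_rank_gen numeral_2_eq_2 less_Suc_eq_le)

lemma det_eq_0_if_left_null_vector:
  fixes X :: "'a::field^'n^'n"
  assumes "w \<noteq> 0" and "w v* X = 0"
  shows "det X = 0"
proof (rule ccontr)
  assume "det X \<noteq> 0"
  then obtain B where "X ** B = mat 1"
    using invertible_det_nz invertible_right_inverse by blast
  then have "w = (w v* X) v* B"
    by (simp add: vector_matrix_mul_assoc)
  then show False
    using assms by simp
qed

lemma proportional_if_cross_eq:
  fixes \<alpha> \<beta> \<gamma> \<delta> :: "'a::field"
  assumes "(\<gamma>, \<delta>) \<noteq> (0, 0)" and "\<alpha> * \<delta> = \<beta> * \<gamma>"
  shows "\<exists>c. \<alpha> = c * \<gamma> \<and> \<beta> = c * \<delta>"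
proof (cases "\<gamma> = 0")
  case True
  then show ?thesis
    using assms by (intro exI[of _ "\<beta> / \<delta>"]) (auto simp: field_simps)
next
  case False
  then show ?thesis
    using assms(2) by (intro exI[of _ "\<alpha> / \<gamma>"]) (auto simp: field_simps)
qed

definition cinner :: "complex^'n \<Rightarrow> complex^'n \<Rightarrow> complex" where
  "cinner u v = (\<Sum>i\<in>UNIV. cnj (u$i) * v$i)"

lemma cinner_add_right: "cinner u (v + w) = cinner u v + cinner u w"
  by (simp add: cinner_def sum.distrib algebra_simps)

lemma cinner_scale_left: "cinner (c *s u) v = cnj c * cinner u v"
  by (simp add: cinner_def sum_distrib_left algebra_simps)

lemma cinner_scale_right: "cinner u (c *s v) = c * cinner u v"
  by (simp add: cinner_def sum_distrib_left algebra_simps)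

lemma cinner_axis_left: "cinner (axis j c) v = cnj c * v$j"
  by (simp add: cinner_def axis_def if_distrib[of cnj] if_distrib[of "\<lambda>z. z * _"] cong: if_cong)

lemma Re_cinner: "Re (cinner u v) = inner u v"
  by (simp add: cinner_def inner_vec_def inner_complex_def)

lemma norm_cinner_le: "cmod (cinner u v) \<le> norm u * norm v"
proof -
  have "cmod (cinner u v) \<le> (\<Sum>i\<in>UNIV. \<bar>cmod (u$i)\<bar> * \<bar>cmod (v$i)\<bar>)"
    unfolding cinner_def by (rule order_trans[OF norm_sum]) (simp add: norm_mult)
  also have "\<dots> \<le> norm u * norm v"
    unfolding norm_vec_def by (rule L2_set_mult_ineq)
  finally show ?thesis .
qed

lemma norm_add_sq_cinner:
  "(norm (u + v))\<^sup>2 = (norm u)\<^sup>2 + 2 * Re (cinner u v) + (norm v)\<^sup>2"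
  by (simp add: Re_cinner power2_norm_eq_inner inner_add inner_commute)

lemma norm_smult_vec: "norm (c *s v) = norm c * norm (v::'a::real_normed_field^'n)"
  by (simp add: norm_vec_def norm_mult L2_set_right_distrib)

lemma norm_axis: "norm (axis j c) = norm (c::'a::real_inner)"
proof -
  have "(norm (axis j c))\<^sup>2 = (norm c)\<^sup>2"
    by (simp add: power2_norm_eq_inner inner_axis_axis)
  then show ?thesis
    by simp
qed

lemma norm_sq_split_axis:
  fixes x :: "complex^'n"
  shows "(norm x)\<^sup>2 = (cmod (x$j))\<^sup>2 + (norm (x - axis j (x$j)))\<^sup>2"
  using norm_add_sq_cinner[of "axis j (x$j)" "x - axis j (x$j)"]
  by (simp add: cinner_axis_left norm_axis)

definition column_matrix :: "'n \<Rightarrow> 'a^'m \<Rightarrow> 'a::zero^'n^'m" where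
  "column_matrix j a = (\<chi> i k. if k = j then a$i else 0)"

lemma column_matrix_mult_vector:
  "column_matrix j a *v x = x$j *s (a::'a::comm_semiring_1^'m)"
  by (simp add: vec_eq_iff matrix_vector_mult_def column_matrix_def if_distrib[of "\<lambda>z. z * _"]
      cong: if_cong) (simp add: mult.commute)

lemma matrix_vector_mult_axis: "Y *v axis j c = c *s column j (Y::'a::comm_semiring_1^'n^'m)"
  by (simp add: vec_eq_iff matrix_vector_mult_def column_def axis_def mult.commute if_distrib
      cong: if_cong)

lemma matrix_vector_mult_split_axis:
  "Y *v x = x$j *s column j Y + Y *v (x - axis j (x$j))" for Y :: "'a::comm_ring_1^'n^'m"
  by (simp add: matrix_vector_mult_diff_distrib matrix_vector_mult_axis)

lemma cscale_mult_vector: "cscale l Y *v x = l *s (Y *v x)"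
  by (simp add: vec_eq_iff matrix_vector_mult_def cscale_def sum_distrib_left algebra_simps)

lemma norm_mult_vector_le_opnorm: "norm (M *v x) \<le> opnorm M * norm x"
  unfolding opnorm_def by (rule onorm) simp

lemma opnorm_nonneg: "0 \<le> opnorm M"
  unfolding opnorm_def by (rule onorm_pos_le) simp

lemma opnorm_sq_le:
  assumes "\<And>x. (norm (M *v x))\<^sup>2 \<le> b * (norm x)\<^sup>2"
  shows "(opnorm M)\<^sup>2 \<le> b"
proof -
  have "opnorm M \<le> sqrt b"
    unfolding opnorm_def
  proof (rule onorm_le)
    fix x
    show "norm (M *v x) \<le> sqrt b * norm x"
      using real_sqrt_le_mono[OF assms[of x]] by (simp add: real_sqrt_mult)
  qed
  moreover have "0 \<le> b"
    using order_trans[OF opnorm_nonneg calculation] by simp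
  ultimately show ?thesis
    using power_mono[OF _ opnorm_nonneg, of M "sqrt b" 2] by simp
qed

lemma norm_column_le_opnorm: "norm (column j M) \<le> opnorm M"
  using norm_mult_vector_le_opnorm[of M "axis j 1"] by (simp add: matrix_vector_mult_axis norm_axis)

lemma opnorm_column_matrix: "opnorm (column_matrix j a) = norm a"
proof (rule antisym)
  show "opnorm (column_matrix j a) \<le> norm a"
    unfolding opnorm_def column_matrix_mult_vector
  proof (rule onorm_le)
    fix x :: "complex^2"
    have "norm (x$j) * norm a \<le> norm x * norm a"
      by (intro mult_right_mono Finite_Cartesian_Product.norm_nth_le norm_ge_zero)
    then show "norm (x$j *s a) \<le> norm a * norm x"
      by (simp add: norm_smult_vec mult.commute)
  qed
  show "norm a \<le> opnorm (column_matrix j a)"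
    using norm_column_le_opnorm[of j "column_matrix j a"]
    by (simp add: column_def column_matrix_def vec_lambda_eta)
qed

lemma cmod_cinner_column_le: "cmod (cinner a (column j Y)) \<le> norm a * opnorm Y"
proof -
  have "cmod (cinner a (column j Y)) \<le> norm a * norm (column j Y)"
    by (rule norm_cinner_le)
  also have "\<dots> \<le> norm a * opnorm Y"
    by (intro mult_left_mono norm_column_le_opnorm norm_ge_zero)
  finally show ?thesis .
qed

lemma opnorm_pos_if_cinner_column_nz:
  assumes "cinner a (column j Y) \<noteq> 0"
  shows "0 < opnorm Y"
proof -
  have "0 < norm a * opnorm Y"
    using cmod_cinner_column_le[of a j Y] assms by (meson less_le_trans zero_less_norm_iff)
  then show ?thesis
    using opnorm_nonneg[of Y] by (simp add: zero_less_mult_iff)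
qed

lemma norm_column_matrix_add_cscale_mult_sq:
  "(norm ((column_matrix j a + cscale l Y) *v x))\<^sup>2
    = (cmod (x$j))\<^sup>2 * (norm a)\<^sup>2 + 2 * Re (cnj (x$j) * l * cinner a (Y *v x))
      + (cmod l)\<^sup>2 * (norm (Y *v x))\<^sup>2"
proof -
  have "(norm ((column_matrix j a + cscale l Y) *v x))\<^sup>2
      = (norm (x$j *s a))\<^sup>2 + 2 * Re (cinner (x$j *s a) (l *s (Y *v x))) + (norm (l *s (Y *v x)))\<^sup>2"
    by (simp only: matrix_vector_mult_add_rdistrib column_matrix_mult_vector cscale_mult_vector
        norm_add_sq_cinner)
  then show ?thesis
    by (simp only: cinner_scale_left cinner_scale_right norm_smult_vec power_mult_distrib mult_ac)
qed

lemma Re_perturbation_cross_term_le: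
  fixes Y :: cmat2 and a x :: "complex^2" and j :: 2
  defines "c \<equiv> cinner a (column j Y)" and "N \<equiv> opnorm Y"
  shows "Re (cnj (x$j) * (- cnj c / (2 * N\<^sup>2)) * cinner a (Y *v x))
    \<le> - ((cmod (x$j))\<^sup>2 * (cmod c)\<^sup>2 / (2 * N\<^sup>2))
      + cmod (x$j) * (cmod c / (2 * N\<^sup>2)) * (norm a * N * norm (x - axis j (x$j)))"
proof -
  define l where "l = - cnj c / (2 * N\<^sup>2)"
  define x' where "x' = x - axis j (x$j)"
  have "cnj (x$j) * l * cinner a (Y *v x)
      = cnj (x$j) * l * (x$j * c) + cnj (x$j) * l * cinner a (Y *v x')"
    by (subst matrix_vector_mult_split_axis[of _ _ j])
      (simp add: cinner_add_right cinner_scale_right distrib_left c_def x'_def)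
  also have "cnj (x$j) * l * (x$j * c) = - (x$j * cnj (x$j)) * (c * cnj c) / (2 * N\<^sup>2)"
    by (simp add: l_def mult_ac)
  also have "\<dots> = - of_real ((cmod (x$j))\<^sup>2 * (cmod c)\<^sup>2 / (2 * N\<^sup>2))"
    unfolding complex_norm_square[symmetric] by simp
  finally have split: "cnj (x$j) * l * cinner a (Y *v x)
      = - of_real ((cmod (x$j))\<^sup>2 * (cmod c)\<^sup>2 / (2 * N\<^sup>2)) + cnj (x$j) * l * cinner a (Y *v x')" .
  have "cmod (cinner a (Y *v x')) \<le> norm a * norm (Y *v x')"
    by (rule norm_cinner_le)
  also have "\<dots> \<le> norm a * N * norm x'"
    unfolding N_def mult.assoc by (intro mult_left_mono norm_mult_vector_le_opnorm norm_ge_zero)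
  finally have rest: "cmod (cinner a (Y *v x')) \<le> norm a * N * norm x'" .
  have "Re (cnj (x$j) * l * cinner a (Y *v x')) \<le> cmod (cnj (x$j) * l * cinner a (Y *v x'))"
    by (rule complex_Re_le_cmod)
  also have "\<dots> = cmod (x$j) * (cmod c / (2 * N\<^sup>2)) * cmod (cinner a (Y *v x'))"
    by (simp add: l_def norm_mult norm_divide norm_power)
  also have "\<dots> \<le> cmod (x$j) * (cmod c / (2 * N\<^sup>2)) * (norm a * N * norm x')"
    using rest by (rule mult_left_mono) simp
  finally have "Re (cnj (x$j) * l * cinner a (Y *v x'))
      \<le> cmod (x$j) * (cmod c / (2 * N\<^sup>2)) * (norm a * N * norm x')" .
  moreover have "Re (cnj (x$j) * l * cinner a (Y *v x))
      = - ((cmod (x$j))\<^sup>2 * (cmod c)\<^sup>2 / (2 * N\<^sup>2)) + Re (cnj (x$j) * l * cinner a (Y *v x'))"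
    unfolding split by (simp only: plus_complex.sel uminus_complex.sel Re_complex_of_real)
  ultimately show ?thesis
    unfolding l_def x'_def by linarith
qed

lemma perturbation_quadratic_bound:
  fixes n N u r s :: real
  assumes "0 < N" "0 \<le> u" "u \<le> n * N"
  shows "n\<^sup>2 * r\<^sup>2 - u\<^sup>2 * r\<^sup>2 / N\<^sup>2 + u * n * N * r * s / N\<^sup>2 + u\<^sup>2 * (r\<^sup>2 + s\<^sup>2) / (4 * N\<^sup>2)
    \<le> (n\<^sup>2 - u\<^sup>2 / (4 * N\<^sup>2)) * (r\<^sup>2 + s\<^sup>2)"
proof -
  have "u\<^sup>2 \<le> (n * N)\<^sup>2"
    using assms by (intro power_mono) auto
  then have "0 \<le> 2 * (u * r - n * N * s)\<^sup>2 + 2 * s\<^sup>2 * ((n * N)\<^sup>2 - u\<^sup>2)"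
    by simp
  also have "\<dots> = 4 * N\<^sup>2 * ((n\<^sup>2 - u\<^sup>2 / (4 * N\<^sup>2)) * (r\<^sup>2 + s\<^sup>2)
      - (n\<^sup>2 * r\<^sup>2 - u\<^sup>2 * r\<^sup>2 / N\<^sup>2 + u * n * N * r * s / N\<^sup>2 + u\<^sup>2 * (r\<^sup>2 + s\<^sup>2) / (4 * N\<^sup>2)))"
    using assms(1) by (simp add: field_simps power2_eq_square)
  finally show ?thesis
    using assms(1) by (simp add: zero_le_mult_iff)
qed

lemma opnorm_perturbed_column_matrix_sq_le:
  fixes Y :: cmat2 and a :: "complex^2" and j :: 2
  defines "c \<equiv> cinner a (column j Y)" and "N \<equiv> opnorm Y"
  assumes "c \<noteq> 0"
  shows "(opnorm (column_matrix j a + cscale (- cnj c / (2 * N\<^sup>2)) Y))\<^sup>2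
    \<le> (norm a)\<^sup>2 - (cmod c)\<^sup>2 / (4 * N\<^sup>2)"
proof (rule opnorm_sq_le)
  fix x :: "complex^2"
  define l where "l = - cnj c / (2 * N\<^sup>2)"
  define r where "r = cmod (x$j)"
  define s where "s = norm (x - axis j (x$j))"
  have N_pos: "0 < N"
    using assms(3) unfolding N_def c_def by (rule opnorm_pos_if_cinner_column_nz)
  have u_le: "cmod c \<le> norm a * N"
    unfolding c_def N_def by (rule cmod_cinner_column_le)
  have cmod_l: "cmod l = cmod c / (2 * N\<^sup>2)"
    by (simp add: l_def norm_divide norm_power)
  have norm_x: "(norm x)\<^sup>2 = r\<^sup>2 + s\<^sup>2"
    unfolding r_def s_def by (rule norm_sq_split_axis)
  have "(norm (Y *v x))\<^sup>2 \<le> (N * norm x)\<^sup>2"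
    unfolding N_def by (intro power_mono norm_mult_vector_le_opnorm norm_ge_zero)
  then have "(cmod l)\<^sup>2 * (norm (Y *v x))\<^sup>2 \<le> (cmod l)\<^sup>2 * (N\<^sup>2 * (r\<^sup>2 + s\<^sup>2))"
    by (intro mult_left_mono) (simp_all add: power_mult_distrib norm_x)
  also have "\<dots> = (cmod c)\<^sup>2 / (4 * N\<^sup>2) * (r\<^sup>2 + s\<^sup>2)"
    using N_pos by (simp add: cmod_l power2_eq_square)
  finally have tail: "(cmod l)\<^sup>2 * (norm (Y *v x))\<^sup>2 \<le> (cmod c)\<^sup>2 / (4 * N\<^sup>2) * (r\<^sup>2 + s\<^sup>2)" .
  have "(norm ((column_matrix j a + cscale l Y) *v x))\<^sup>2
      = r\<^sup>2 * (norm a)\<^sup>2 + 2 * Re (cnj (x$j) * l * cinner a (Y *v x)) + (cmod l)\<^sup>2 * (norm (Y *v x))\<^sup>2"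
    unfolding r_def by (rule norm_column_matrix_add_cscale_mult_sq)
  also have "\<dots> \<le> r\<^sup>2 * (norm a)\<^sup>2
      + 2 * (- (r\<^sup>2 * (cmod c)\<^sup>2 / (2 * N\<^sup>2)) + r * (cmod c / (2 * N\<^sup>2)) * (norm a * N * s))
      + (cmod c)\<^sup>2 / (4 * N\<^sup>2) * (r\<^sup>2 + s\<^sup>2)"
    using Re_perturbation_cross_term_le[of x j a Y] tail
    by (intro add_mono mult_left_mono order_refl) (simp_all add: c_def N_def l_def r_def s_def)
  also have "\<dots> = (norm a)\<^sup>2 * r\<^sup>2 - (cmod c)\<^sup>2 * r\<^sup>2 / N\<^sup>2 + cmod c * norm a * N * r * s / N\<^sup>2
      + (cmod c)\<^sup>2 * (r\<^sup>2 + s\<^sup>2) / (4 * N\<^sup>2)"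
    by (simp add: algebra_simps)
  also have "\<dots> \<le> ((norm a)\<^sup>2 - (cmod c)\<^sup>2 / (4 * N\<^sup>2)) * (norm x)\<^sup>2"
    unfolding norm_x by (rule perturbation_quadratic_bound[OF N_pos norm_ge_zero u_le])
  finally show "(norm ((column_matrix j a + cscale l Y) *v x))\<^sup>2
      \<le> ((norm a)\<^sup>2 - (cmod c)\<^sup>2 / (4 * N\<^sup>2)) * (norm x)\<^sup>2" .
qed

lemma bj_orth_column_matrix_iff:
  "bj_orth (column_matrix j a) Y \<longleftrightarrow> cinner a (column j Y) = 0"
proof
  assume orth: "bj_orth (column_matrix j a) Y"
  show "cinner a (column j Y) = 0"
  proof (rule ccontr)
    define c where "c = cinner a (column j Y)"
    define N where "N = opnorm Y"
    assume "cinner a (column j Y) \<noteq> 0"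
    then have "c \<noteq> 0" and "0 < N"
      unfolding c_def N_def by (auto intro: opnorm_pos_if_cinner_column_nz)
    have "(norm a)\<^sup>2 \<le> (opnorm (column_matrix j a + cscale (- cnj c / (2 * N\<^sup>2)) Y))\<^sup>2"
      using orth unfolding bj_orth_def opnorm_column_matrix by (simp add: power_mono)
    also have "\<dots> \<le> (norm a)\<^sup>2 - (cmod c)\<^sup>2 / (4 * N\<^sup>2)"
      using \<open>c \<noteq> 0\<close> unfolding c_def N_def by (rule opnorm_perturbed_column_matrix_sq_le)
    also have "\<dots> < (norm a)\<^sup>2"
      using \<open>c \<noteq> 0\<close> \<open>0 < N\<close> by simp
    finally show False
      by simp
  qed
next
  assume orth: "cinner a (column j Y) = 0"
  show "bj_orth (column_matrix j a) Y"
    unfolding bj_orth_def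
  proof
    fix l
    have "(norm a)\<^sup>2 \<le> (norm (a + l *s column j Y))\<^sup>2"
      by (simp add: norm_add_sq_cinner cinner_scale_right orth)
    then have "norm a \<le> norm (a + l *s column j Y)"
      by (rule power2_le_imp_le) simp
    also have "a + l *s column j Y = column j (column_matrix j a + cscale l Y)"
      by (simp add: vec_eq_iff column_def column_matrix_def cscale_def)
    also have "norm \<dots> \<le> opnorm (column_matrix j a + cscale l Y)"
      by (rule norm_column_le_opnorm)
    finally show "opnorm (column_matrix j a) \<le> opnorm (column_matrix j a + cscale l Y)"
      by (simp add: opnorm_column_matrix)
  qed
qed

lemma cinner_vector_2: "cinner (vector [\<alpha>, \<beta>]) (v::complex^2) = cnj \<alpha> * v$1 + cnj \<beta> * v$2"
  by (simp add: cinner_def sum_2)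

lemma mat2_eq_column_matrix:
  "mat2 \<alpha> 0 \<beta> 0 = column_matrix 1 (vector [\<alpha>, \<beta>])"
  "mat2 0 \<gamma> 0 \<delta> = column_matrix 2 (vector [\<gamma>, \<delta>])"
  by (simp_all add: vec_eq_iff forall_2 mat2_def column_matrix_def)

lemma mat2_0: "mat2 0 0 0 0 = 0"
  by (simp add: vec_eq_iff forall_2 mat2_def)

lemma bj_perp_mat2_iff:
  "X \<in> bj_perp (mat2 \<alpha> 0 \<beta> 0) \<inter> bj_perp (mat2 0 \<gamma> 0 \<delta>)
    \<longleftrightarrow> cnj \<alpha> * X$1$1 + cnj \<beta> * X$2$1 = 0 \<and> cnj \<gamma> * X$1$2 + cnj \<delta> * X$2$2 = 0"
  by (simp add: bj_perp_def mat2_eq_column_matrix bj_orth_column_matrix_iff cinner_vector_2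
      column_def)

lemma cross_eq_if_bj_perp_rank_le_1:
  assumes "\<forall>X \<in> bj_perp (mat2 \<alpha> 0 \<beta> 0) \<inter> bj_perp (mat2 0 \<gamma> 0 \<delta>). rank X \<le> 1"
  shows "\<alpha> * \<delta> = \<beta> * \<gamma>"
proof -
  have "mat2 (cnj \<beta>) (cnj \<delta>) (- cnj \<alpha>) (- cnj \<gamma>) \<in> bj_perp (mat2 \<alpha> 0 \<beta> 0) \<inter> bj_perp (mat2 0 \<gamma> 0 \<delta>)"
    unfolding bj_perp_mat2_iff by (simp add: mat2_def mult.commute)
  then have "det (mat2 (cnj \<beta>) (cnj \<delta>) (- cnj \<alpha>) (- cnj \<gamma>)) = 0"
    using assms rank_le_1_iff_det_eq_0 by blast
  then have "cnj (\<alpha> * \<delta>) = cnj (\<beta> * \<gamma>)"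
    by (simp add: det_2 mat2_def algebra_simps)
  then show ?thesis
    by (simp only: complex_cnj_cancel_iff)
qed

lemma rank_le_1_if_bj_perp_proportional:
  assumes "(\<gamma>, \<delta>) \<noteq> (0, 0)" and "c \<noteq> 0"
    and "X \<in> bj_perp (mat2 (c * \<gamma>) 0 (c * \<delta>) 0) \<inter> bj_perp (mat2 0 \<gamma> 0 \<delta>)"
  shows "rank X \<le> 1"
proof -
  have "cnj c * (cnj \<gamma> * X$1$1 + cnj \<delta> * X$2$1) = 0"
    and "cnj \<gamma> * X$1$2 + cnj \<delta> * X$2$2 = 0"
    using assms(3) unfolding bj_perp_mat2_iff by (simp_all add: algebra_simps)
  then have "vector [cnj \<gamma>, cnj \<delta>] v* X = 0"
    using assms(2) by (simp add: vec_eq_iff forall_2 vector_matrix_mult_def sum_2)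
  moreover have "vector [cnj \<gamma>, cnj \<delta>] \<noteq> (0 :: complex^2)"
    using assms(1) by (auto simp: vec_eq_iff forall_2)
  ultimately show ?thesis
    using det_eq_0_if_left_null_vector rank_le_1_iff_det_eq_0 by blast
qed

theorem lemma5p4:
  fixes \<alpha> \<beta> \<gamma> \<delta> :: complex
  assumes "rank (mat2 \<alpha> 0 \<beta> 0) = 1"
    and "rank (mat2 0 \<gamma> 0 \<delta>) = 1"
  shows "(\<forall>X \<in> bj_perp (mat2 \<alpha> 0 \<beta> 0) \<inter> bj_perp (mat2 0 \<gamma> 0 \<delta>). rank X \<le> 1)
     \<longleftrightarrow> ((\<alpha>, \<beta>) \<in> {(c * \<gamma>, c * \<delta>) | c. True} - {(0, 0)})"
proof -
  have \<alpha>\<beta>: "(\<alpha>, \<beta>) \<noteq> (0, 0)" and \<gamma>\<delta>: "(\<gamma>, \<delta>) \<noteq> (0, 0)"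
    using assms by (auto simp: mat2_0)
  show ?thesis
  proof
    assume "\<forall>X \<in> bj_perp (mat2 \<alpha> 0 \<beta> 0) \<inter> bj_perp (mat2 0 \<gamma> 0 \<delta>). rank X \<le> 1"
    then show "(\<alpha>, \<beta>) \<in> {(c * \<gamma>, c * \<delta>) | c. True} - {(0, 0)}"
      using proportional_if_cross_eq[OF \<gamma>\<delta> cross_eq_if_bj_perp_rank_le_1] \<alpha>\<beta> by auto
  next
    assume "(\<alpha>, \<beta>) \<in> {(c * \<gamma>, c * \<delta>) | c. True} - {(0, 0)}"
    then obtain c where "\<alpha> = c * \<gamma>" "\<beta> = c * \<delta>" "c \<noteq> 0"
      by auto
    then show "\<forall>X \<in> bj_perp (mat2 \<alpha> 0 \<beta> 0) \<inter> bj_perp (mat2 0 \<gamma> 0 \<delta>). rank X \<le> 1"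
      using rank_le_1_if_bj_perp_proportional[OF \<gamma>\<delta>] by blast
  qed
qed

end
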